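(* Let $G$ be the communication graph of a system admitting synchronization schedules. The isolation-resilience of the synchronized communication system on $G$ is the same whichever synchronization schedule on $G$ is used.
   Context: Model. A system consists of pairwise disjoint unit circles $C_1,\dots,C_n$ in the plane (trajectories) and a communication range $r>0$. Its communication graph $G$ has vertex set $\{C_1,\dots,C_n\}$, $C_i,C_j$ adjacent iff the distance between their centres is at most $2+r$; $G$ is assumed connected. Positions on a circle are angles (mod $2\pi$). For an edge $(i,j)$, the link position $\phi_{ij}$ is the angle of the point of $C_i$ closest to $C_j$. A schedule $F=(f,g)$ assigns each circle a starting angle $f(C_i)\in[0,2\pi)$ and direction $g(C_i)\in\{1,-1\}$; a robot following it on $C_i$ is at $f(C_i)+g(C_i)2\pi t$ at time $t$. $F$ is a synchronization schedule if $g(C_i)=-g(C_j)$ for adjacent circles and robots following $F$ on adjacent $C_i,C_j$ are at $\phi_{ij},\phi_{ji}$ at exactly the same times. A synchronized communication system (SCS) on $G$ consists of $n$ robots, initially one per circle, following a synchronization schedule, with the switching rule: when a robot on $C_i$ reaches $\phi_{ij}$ and $C_j$ is empty, it instantly passes to $C_j$ and follows the schedule of $C_j$; if $C_j$ has a robot, they meet and each stays on its circle. A partial SCS arises by letting some robots leave (possibly at different times); remaining robots never leave. A surviving robot $u$ starves if every time $u$ arrives at a link position $\phi_{ij}$ of its current circle $C_i$, the circle $C_j$ is empty; the system is in starvation state if all surviving robots starve. The isolation-resilience of an SCS is the largest $k$ such that, whichever $k$ robots leave, the system does not fall into starvation state. *)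

theory Defs
  imports "HOL-Analysis.Analysis"
begin

text \<open>A system: circles C_0..C_{n-1} with centres c i (unit radius), range r.
  Circles are indexed by the natural numbers below n.\<close>

definition adj :: "nat \<Rightarrow> (nat \<Rightarrow> complex) \<Rightarrow> real \<Rightarrow> nat \<Rightarrow> nat \<Rightarrow> bool" where
  "adj n c r i j \<longleftrightarrow> i < n \<and> j < n \<and> i \<noteq> j \<and> dist (c i) (c j) \<le> 2 + r"

definition valid_system :: "nat \<Rightarrow> (nat \<Rightarrow> complex) \<Rightarrow> real \<Rightarrow> bool" where
  "valid_system n c r \<longleftrightarrow> n \<ge> 1 \<and> r > 0
     \<and> (\<forall>i<n. \<forall>j<n. i \<noteq> j \<longrightarrow> dist (c i) (c j) > 2)
     \<and> (\<forall>i<n. \<forall>j<n. (i, j) \<in> {(a, b). adj n c r a b}\<^sup>*)"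

text \<open>Link position: angle of the point of C_i closest to C_j.\<close>
definition link_pos :: "(nat \<Rightarrow> complex) \<Rightarrow> nat \<Rightarrow> nat \<Rightarrow> real" where
  "link_pos c i j = Arg (c j - c i)"

definition on_angle :: "real \<Rightarrow> real \<Rightarrow> bool" where
  "on_angle x \<theta> \<longleftrightarrow> (\<exists>m::int. x = \<theta> + 2 * pi * of_int m)"

text \<open>Position at time t of a robot following schedule (f, g) on C_i.\<close>
definition pos :: "(nat \<Rightarrow> real) \<Rightarrow> (nat \<Rightarrow> int) \<Rightarrow> nat \<Rightarrow> real \<Rightarrow> real" where
  "pos f g i t = f i + of_int (g i) * 2 * pi * t"

definition sync_schedule ::
  "nat \<Rightarrow> (nat \<Rightarrow> complex) \<Rightarrow> real \<Rightarrow> (nat \<Rightarrow> real) \<Rightarrow> (nat \<Rightarrow> int) \<Rightarrow> bool" where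
  "sync_schedule n c r f g \<longleftrightarrow>
     (\<forall>i<n. 0 \<le> f i \<and> f i < 2 * pi \<and> (g i = 1 \<or> g i = -1))
     \<and> (\<forall>i j. adj n c r i j \<longrightarrow> g i = - g j
            \<and> (\<forall>t. on_angle (pos f g i t) (link_pos c i j)
                   \<longleftrightarrow> on_angle (pos f g j t) (link_pos c j i)))"

definition active ::
  "nat \<Rightarrow> (nat \<Rightarrow> complex) \<Rightarrow> real \<Rightarrow> (nat \<Rightarrow> real) \<Rightarrow> (nat \<Rightarrow> int) \<Rightarrow> real \<Rightarrow> nat \<Rightarrow> nat \<Rightarrow> bool" where
  "active n c r f g t i j \<longleftrightarrow> adj n c r i j \<and> on_angle (pos f g i t) (link_pos c i j)"

text \<open>Switching rule at time t applied to the set S of occupied circles (state just before t):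
  a robot on C_j at phi_ji leaves to C_i if C_i is empty; an empty C_j receives the robot of
  C_i if that robot is at phi_ij.\<close>
definition switch ::
  "nat \<Rightarrow> (nat \<Rightarrow> complex) \<Rightarrow> real \<Rightarrow> (nat \<Rightarrow> real) \<Rightarrow> (nat \<Rightarrow> int) \<Rightarrow> real \<Rightarrow> nat set \<Rightarrow> nat set" where
  "switch n c r f g t S =
     {j. j \<in> S \<and> \<not> (\<exists>i. active n c r f g t j i \<and> i \<notin> S)}
     \<union> {j. j \<notin> S \<and> (\<exists>i. active n c r f g t i j \<and> i \<in> S)}"

definition left_value :: "(real \<Rightarrow> nat set) \<Rightarrow> real \<Rightarrow> nat set \<Rightarrow> bool" where
  "left_value occ t S \<longleftrightarrow> (\<exists>e>0. \<forall>s. t - e < s \<and> s < t \<longrightarrow> occ s = S)"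

text \<open>A (partial) SCS run: occ t is the set of occupied circles at time t (after the events at t).
  Initially every circle holds a robot; at every time the state is obtained from the state just
  before by the switching rule, after which some robots may leave (subset).\<close>
definition partial_run ::
  "nat \<Rightarrow> (nat \<Rightarrow> complex) \<Rightarrow> real \<Rightarrow> (nat \<Rightarrow> real) \<Rightarrow> (nat \<Rightarrow> int) \<Rightarrow> (real \<Rightarrow> nat set) \<Rightarrow> bool" where
  "partial_run n c r f g occ \<longleftrightarrow>
     (\<forall>t\<ge>0. occ t \<subseteq> {..<n})
     \<and> occ 0 \<subseteq> switch n c r f g 0 {..<n}
     \<and> (\<forall>t>0. \<exists>S. left_value occ t S \<and> occ t \<subseteq> switch n c r f g t S)"

text \<open>Exactly k robots leave (in total) during the run.\<close>
definition leaves :: "nat \<Rightarrow> (real \<Rightarrow> nat set) \<Rightarrow> nat \<Rightarrow> bool" where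
  "leaves n occ k \<longleftrightarrow> (\<exists>T\<ge>0. \<forall>t\<ge>T. card (occ t) = n - k)"

text \<open>The run falls into starvation state: from some time on, whenever a robot on C_i arrives
  at phi_ij, circle C_j is empty (no meeting ever happens again).\<close>
definition starvation ::
  "nat \<Rightarrow> (nat \<Rightarrow> complex) \<Rightarrow> real \<Rightarrow> (nat \<Rightarrow> real) \<Rightarrow> (nat \<Rightarrow> int) \<Rightarrow> (real \<Rightarrow> nat set) \<Rightarrow> bool" where
  "starvation n c r f g occ \<longleftrightarrow>
     (\<exists>T\<ge>0. \<forall>t\<ge>T. \<forall>S. left_value occ t S \<longrightarrow>
        \<not> (\<exists>i j. active n c r f g t i j \<and> i \<in> S \<and> j \<in> S))"

definition resilient ::
  "nat \<Rightarrow> (nat \<Rightarrow> complex) \<Rightarrow> real \<Rightarrow> (nat \<Rightarrow> real) \<Rightarrow> (nat \<Rightarrow> int) \<Rightarrow> nat \<Rightarrow> bool" where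
  "resilient n c r f g k \<longleftrightarrow> k \<le> n \<and>
     (\<forall>occ. partial_run n c r f g occ \<and> leaves n occ k \<longrightarrow> \<not> starvation n c r f g occ)"

definition isolation_resilience ::
  "nat \<Rightarrow> (nat \<Rightarrow> complex) \<Rightarrow> real \<Rightarrow> (nat \<Rightarrow> real) \<Rightarrow> (nat \<Rightarrow> int) \<Rightarrow> nat" where
  "isolation_resilience n c r f g = (GREATEST k. resilient n c r f g k)"

end

theory Submission
  imports Defs
begin

text \<open>
  Starvation after \<open>k\<close> robots have left is possible iff at every time \<open>t\<close> some \<open>n - k\<close>
  circles contain no pair whose robots are at their common link at time \<open>t\<close>. A starving run
  yields such sets because schedules have period 1. Conversely, a run can hop from one such set
  to the next just before every link event: a robot is at no more than one link position at a
  time, so the switching rule never loses robots. Two synchronization schedules bring the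
  robots to the links at the same events up to a time change \<open>t \<mapsto> \<tau> \<plusminus> t\<close>, because by
  connectivity the directions agree or are all reversed, and the starting angles agree up to a
  common phase modulo \<open>2\<pi>\<close>. This time change preserves the above condition.
\<close>

lemma on_angle_add_2pi_multiple:
  "on_angle (x + 2 * pi * of_int m) \<theta> \<longleftrightarrow> on_angle x \<theta>"
  unfolding on_angle_def
proof
  assume "\<exists>k::int. x + 2 * pi * of_int m = \<theta> + 2 * pi * of_int k"
  then obtain k :: int where "x + 2 * pi * of_int m = \<theta> + 2 * pi * of_int k"
    by blast
  then have "x = \<theta> + 2 * pi * of_int (k - m)"
    by (simp add: algebra_simps)
  then show "\<exists>k::int. x = \<theta> + 2 * pi * of_int k"
    by blast
next
  assume "\<exists>k::int. x = \<theta> + 2 * pi * of_int k"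
  then obtain k :: int where "x = \<theta> + 2 * pi * of_int k"
    by blast
  then have "x + 2 * pi * of_int m = \<theta> + 2 * pi * of_int (k + m)"
    by (simp add: algebra_simps)
  then show "\<exists>k::int. x + 2 * pi * of_int m = \<theta> + 2 * pi * of_int k"
    by blast
qed

lemma on_angle_unique:
  assumes "on_angle x \<theta>" "on_angle x \<theta>'" "\<bar>\<theta> - \<theta>'\<bar> < 2 * pi"
  shows "\<theta> = \<theta>'"
proof -
  obtain k k' :: int where "x = \<theta> + 2 * pi * of_int k" "x = \<theta>' + 2 * pi * of_int k'"
    using assms(1,2) unfolding on_angle_def by blast
  then have diff: "\<theta> - \<theta>' = 2 * pi * of_int (k' - k)"
    by (simp add: algebra_simps)
  with assms(3) have "\<bar>real_of_int (k' - k)\<bar> < 1"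
    using pi_gt_zero by (simp add: abs_mult)
  then have "k' = k"
    by linarith
  with diff show ?thesis
    by simp
qed

lemma dist_eq_abs_norm_diff_if_Arg_eq:
  fixes a b :: complex
  assumes "a \<noteq> 0" "b \<noteq> 0" "Arg a = Arg b"
  shows "dist a b = \<bar>norm a - norm b\<bar>"
proof -
  obtain x where x: "0 < x" "a = of_real x * b"
    using Arg_eq_iff assms by blast
  then have "a - b = of_real (x - 1) * b"
    by (simp add: algebra_simps)
  then have "dist a b = \<bar>x - 1\<bar> * norm b"
    by (simp only: dist_norm norm_mult norm_of_real)
  also have "\<dots> = \<bar>x * norm b - norm b\<bar>"
    by (simp add: abs_mult_pos left_diff_distrib flip: abs_mult)
  also have "x * norm b = norm a"
    using x by (simp add: norm_mult)
  finally show ?thesis .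
qed

lemma pos_add_of_int:
  "pos f g i (t + of_int m) = pos f g i t + 2 * pi * of_int (g i * m)"
  by (simp add: pos_def algebra_simps)

lemma active_add_of_int:
  "active n c r f g (t + of_int m) i j \<longleftrightarrow> active n c r f g t i j"
  by (simp only: active_def pos_add_of_int on_angle_add_2pi_multiple)

lemma adj_sym: "adj n c r i j \<Longrightarrow> adj n c r j i"
  by (auto simp: adj_def dist_commute)

lemma sync_schedule_direction:
  "sync_schedule n c r f g \<Longrightarrow> i < n \<Longrightarrow> g i = 1 \<or> g i = -1"
  by (simp add: sync_schedule_def)

lemma sync_schedule_adj_direction:
  "sync_schedule n c r f g \<Longrightarrow> adj n c r i j \<Longrightarrow> g j = - g i"
  unfolding sync_schedule_def using adj_sym by blast

lemma active_sym:
  "sync_schedule n c r f g \<Longrightarrow> active n c r f g t i j \<Longrightarrow> active n c r f g t j i"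
  unfolding active_def sync_schedule_def using adj_sym by blast

text \<open>
  If \<open>\<phi>\<^sub>j\<^sub>i = \<phi>\<^sub>j\<^sub>i\<^sub>'\<close>, the centres of \<open>C\<^sub>i\<close> and \<open>C\<^sub>i\<^sub>'\<close> lie on one ray from the centre of
  \<open>C\<^sub>j\<close> at distances in \<open>(2, 2 + r]\<close>. So \<open>C\<^sub>i\<close> and \<open>C\<^sub>i\<^sub>'\<close> are adjacent, yet both run opposite
  to \<open>C\<^sub>j\<close>.
\<close>
lemma active_unique_partner:
  assumes vs: "valid_system n c r" and sy: "sync_schedule n c r f g"
    and act: "active n c r f g t j i" "active n c r f g t j i'"
  shows "i = i'"
proof (rule ccontr)
  assume "i \<noteq> i'"
  have adj: "adj n c r j i" "adj n c r j i'"
    using act by (auto simp: active_def)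
  then have idx: "j \<noteq> i" "j \<noteq> i'" "i < n" "i' < n" "j < n"
    by (auto simp: adj_def)
  have far: "dist (c i) (c j) > 2" "dist (c i') (c j) > 2"
    using vs idx by (auto simp: valid_system_def)
  have near: "dist (c i) (c j) \<le> 2 + r" "dist (c i') (c j) \<le> 2 + r"
    using adj by (auto simp: adj_def dist_commute)
  have "on_angle (pos f g j t) (Arg (c i - c j))" "on_angle (pos f g j t) (Arg (c i' - c j))"
    using act by (simp_all add: active_def link_pos_def)
  moreover have "\<bar>Arg (c i - c j) - Arg (c i' - c j)\<bar> < 2 * pi"
    using mpi_less_Arg[of "c i - c j"] Arg_le_pi[of "c i - c j"]
      mpi_less_Arg[of "c i' - c j"] Arg_le_pi[of "c i' - c j"] by linarith
  ultimately have "Arg (c i - c j) = Arg (c i' - c j)"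
    by (rule on_angle_unique)
  moreover have "c i - c j \<noteq> 0" "c i' - c j \<noteq> 0"
    using far by (auto simp: dist_norm)
  ultimately have "dist (c i) (c i') = \<bar>dist (c i) (c j) - dist (c i') (c j)\<bar>"
    using dist_eq_abs_norm_diff_if_Arg_eq[of "c i - c j" "c i' - c j"] by (simp add: dist_norm)
  then have "dist (c i) (c i') < r"
    using far near by (simp add: dist_norm)
  with \<open>i \<noteq> i'\<close> vs idx have "adj n c r i i'"
    by (auto simp: adj_def valid_system_def)
  then have "g i' = - g i" "g i = - g j" "g i' = - g j"
    using sync_schedule_adj_direction[OF sy] adj by blast+
  then show False
    using sync_schedule_direction[OF sy idx(3)] by auto
qed

lemma switch_subset_lessThan: "S \<subseteq> {..<n} \<Longrightarrow> switch n c r f g t S \<subseteq> {..<n}"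
  by (auto simp: switch_def active_def adj_def)

lemma switch_lessThan: "switch n c r f g t {..<n} = {..<n}"
  by (auto simp: switch_def active_def adj_def)

lemma switch_no_active: "(\<And>i j. \<not> active n c r f g t i j) \<Longrightarrow> switch n c r f g t S = S"
  by (auto simp: switch_def)

text \<open>
  A robot leaving its circle is mapped to the circle it enters, any other robot to its own
  circle; two robots entering the same circle would be at links of that circle at once.
\<close>
lemma card_le_card_switch:
  assumes vs: "valid_system n c r" and sy: "sync_schedule n c r f g" and S: "S \<subseteq> {..<n}"
  shows "card S \<le> card (switch n c r f g t S)"
proof -
  let ?act = "active n c r f g t"
  define exits where "exits j \<longleftrightarrow> (\<exists>i. ?act j i \<and> i \<notin> S)" for j
  define h where "h j = (if exits j then SOME i. ?act j i \<and> i \<notin> S else j)" for j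
  have moves: "?act j (h j) \<and> h j \<notin> S" if "exits j" for j
    using someI_ex[of "\<lambda>i. ?act j i \<and> i \<notin> S"] that by (simp add: h_def exits_def)
  have stays: "h j = j" if "\<not> exits j" for j
    using that by (simp add: h_def)
  have "inj_on h S"
  proof (rule inj_onI)
    fix a b assume ab: "a \<in> S" "b \<in> S" "h a = h b"
    show "a = b"
    proof (cases "exits a")
      case False
      then have "h a = a"
        by (rule stays)
      with ab(3) have hb: "h b = a"
        by metis
      with ab(1) have "\<not> exits b"
        using moves[of b] by blast
      then have "h b = b"
        by (rule stays)
      with hb show ?thesis
        by simp
    next
      case True
      then have "?act a (h a)" "h a \<notin> S"
        using moves by blast+
      with ab(3) have "h b \<notin> S"
        by simp
      then have "exits b"
        using stays[of b] ab(2) by metis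
      then have "?act b (h a)"
        using moves[of b] ab(3) by simp
      with \<open>?act a (h a)\<close> show ?thesis
        using active_unique_partner[OF vs sy] active_sym[OF sy] by metis
    qed
  qed
  moreover have "h ` S \<subseteq> switch n c r f g t S"
  proof (rule image_subsetI)
    fix j assume "j \<in> S"
    show "h j \<in> switch n c r f g t S"
    proof (cases "exits j")
      case True
      then show ?thesis
        using moves[of j] \<open>j \<in> S\<close> active_sym[OF sy, of t j "h j"] unfolding switch_def by blast
    next
      case False
      then show ?thesis
        using stays[of j] \<open>j \<in> S\<close> unfolding switch_def exits_def by simp
    qed
  qed
  moreover have "finite (switch n c r f g t S)"
    using finite_subset[OF switch_subset_lessThan[OF S]] by simp
  ultimately show ?thesis
    by (rule card_inj_on_le)
qed

definition link_time :: "(nat \<Rightarrow> real) \<Rightarrow> (nat \<Rightarrow> int) \<Rightarrow> (nat \<Rightarrow> complex) \<Rightarrow> nat \<Rightarrow> nat \<Rightarrow> real"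
  where "link_time f g c i j = of_int (g i) * (link_pos c i j - f i) / (2 * pi)"

lemma link_time_diff_Ints:
  assumes sy: "sync_schedule n c r f g" and act: "active n c r f g t i j"
  shows "link_time f g c i j - t \<in> \<int>"
proof -
  have "i < n"
    using act by (auto simp: active_def adj_def)
  then have g: "g i = 1 \<or> g i = -1"
    by (rule sync_schedule_direction[OF sy])
  obtain m :: int where m: "f i + of_int (g i) * 2 * pi * t = link_pos c i j + 2 * pi * of_int m"
    using act unfolding active_def on_angle_def pos_def by blast
  from g have "link_time f g c i j - t = of_int (- g i * m)"
  proof
    assume "g i = 1"
    with m show ?thesis
      by (simp add: link_time_def field_simps)
  next
    assume "g i = -1"
    with m show ?thesis
      by (simp add: link_time_def field_simps)
  qed
  then show ?thesis
    by simp
qed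

text \<open>The element \<open>0\<close> only serves to make the set nonempty.\<close>
definition link_times ::
  "nat \<Rightarrow> (nat \<Rightarrow> complex) \<Rightarrow> real \<Rightarrow> (nat \<Rightarrow> real) \<Rightarrow> (nat \<Rightarrow> int) \<Rightarrow> real set"
  where "link_times n c r f g = insert 0 ((\<lambda>(i, j). link_time f g c i j) ` {(i, j). adj n c r i j})"

lemma finite_link_times: "finite (link_times n c r f g)"
proof -
  have "{(i, j). adj n c r i j} \<subseteq> {..<n} \<times> {..<n}"
    by (auto simp: adj_def)
  then have "finite {(i, j). adj n c r i j}"
    by (rule finite_subset) simp
  then show ?thesis
    by (simp add: link_times_def)
qed

lemma link_times_nonempty: "link_times n c r f g \<noteq> {}"
  by (simp add: link_times_def)

lemma frac_add_if_less_1: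
  fixes x h :: real
  assumes "0 \<le> h" "frac x + h < 1"
  shows "frac (x + h) = frac x + h"
proof -
  have "floor (x + h) = floor x"
  proof (rule floor_unique)
    show "of_int (floor x) \<le> x + h"
      using assms(1) of_int_floor_le[of x] by linarith
    show "x + h < of_int (floor x) + 1"
      using assms(2) by (simp add: frac_def)
  qed
  then show ?thesis
    by (simp add: frac_def)
qed

text \<open>The first time \<open>\<ge> t\<close> that is congruent modulo 1 to a point of \<open>A\<close>.\<close>
definition next_event :: "real set \<Rightarrow> real \<Rightarrow> real"
  where "next_event A t = t + Min ((\<lambda>a. frac (a - t)) ` A)"

lemma next_event_ge: "finite A \<Longrightarrow> A \<noteq> {} \<Longrightarrow> t \<le> next_event A t"
  by (simp add: next_event_def)

lemma next_event_eq_self: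
  assumes "finite A" "a \<in> A" "a - t \<in> \<int>"
  shows "next_event A t = t"
proof -
  have "Min ((\<lambda>a. frac (a - t)) ` A) \<le> frac (a - t)"
    using assms by (intro Min_le) auto
  moreover have "frac (a - t) = 0"
    using assms(3) by simp
  moreover have "0 \<le> Min ((\<lambda>a. frac (a - t)) ` A)"
    using assms by (subst Min_ge_iff) auto
  ultimately show ?thesis
    by (simp add: next_event_def)
qed

lemma next_event_locally_constant_left:
  assumes A: "finite A" "A \<noteq> {}"
  shows "\<exists>e>0. \<forall>s. t - e < s \<and> s < t \<longrightarrow> next_event A s = next_event A t"
proof -
  define e where "e = Min ((\<lambda>a. 1 - frac (a - t)) ` A)"
  have "e > 0"
    using A by (simp add: e_def frac_lt_1)
  moreover have "next_event A s = next_event A t" if s: "t - e < s" "s < t" for s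
  proof -
    have frac_s: "frac (a - s) = frac (a - t) + (t - s)" if "a \<in> A" for a
    proof -
      have "e \<le> 1 - frac (a - t)"
        unfolding e_def using A that by (intro Min_le) auto
      then have "frac ((a - t) + (t - s)) = frac (a - t) + (t - s)"
        using s by (intro frac_add_if_less_1) auto
      then show ?thesis
        by simp
    qed
    have "(\<lambda>a. frac (a - s)) ` A = (\<lambda>x. x + (t - s)) ` (\<lambda>a. frac (a - t)) ` A"
      using frac_s by (auto simp: image_image intro!: image_cong)
    then have "Min ((\<lambda>a. frac (a - s)) ` A) = Min ((\<lambda>a. frac (a - t)) ` A) + (t - s)"
      using A by (simp add: mono_Min_commute[symmetric] mono_def)
    then show ?thesis
      by (simp add: next_event_def)
  qed
  ultimately show ?thesis
    by blast
qed

lemma next_event_link_times: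
  assumes sy: "sync_schedule n c r f g" and act: "active n c r f g t i j"
  shows "next_event (link_times n c r f g) t = t"
proof (rule next_event_eq_self[OF finite_link_times])
  show "link_time f g c i j \<in> link_times n c r f g"
    using act by (auto simp: link_times_def active_def)
  show "link_time f g c i j - t \<in> \<int>"
    by (rule link_time_diff_Ints[OF sy act])
qed

lemma left_value_unique: "left_value occ t S \<Longrightarrow> left_value occ t S' \<Longrightarrow> S = S'"
proof -
  assume "left_value occ t S" "left_value occ t S'"
  then obtain e e' where e: "e > 0" "\<forall>s. t - e < s \<and> s < t \<longrightarrow> occ s = S"
    and e': "e' > 0" "\<forall>s. t - e' < s \<and> s < t \<longrightarrow> occ s = S'"
    unfolding left_value_def by blast
  define s where "s = t - min e e' / 2"
  have "t - e < s \<and> s < t" "t - e' < s \<and> s < t"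
    using e(1) e'(1) by (auto simp: s_def min_def)
  then show "S = S'"
    using e(2) e'(2) by metis
qed

lemma left_value_next_event:
  assumes A: "finite A" "A \<noteq> {}"
  shows "left_value (\<lambda>s. if next_event A s = s then X s else B (next_event A s)) t
           (B (next_event A t))"
proof -
  obtain e where e: "e > 0" "\<forall>s. t - e < s \<and> s < t \<longrightarrow> next_event A s = next_event A t"
    using next_event_locally_constant_left[OF A] by blast
  have "(if next_event A s = s then X s else B (next_event A s)) = B (next_event A t)"
    if s: "t - e < s" "s < t" for s
  proof -
    have "next_event A s = next_event A t"
      using e(2) s by blast
    moreover have "t \<le> next_event A t"
      by (rule next_event_ge[OF A])
    ultimately show ?thesis
      using s(2) by simp
  qed
  with e(1) show ?thesis
    unfolding left_value_def by blast
qed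

definition independent_at ::
  "nat \<Rightarrow> (nat \<Rightarrow> complex) \<Rightarrow> real \<Rightarrow> (nat \<Rightarrow> real) \<Rightarrow> (nat \<Rightarrow> int) \<Rightarrow> real \<Rightarrow> nat set \<Rightarrow> bool"
  where "independent_at n c r f g t S \<longleftrightarrow> (\<forall>i\<in>S. \<forall>j\<in>S. \<not> active n c r f g t i j)"

definition starvable ::
  "nat \<Rightarrow> (nat \<Rightarrow> complex) \<Rightarrow> real \<Rightarrow> (nat \<Rightarrow> real) \<Rightarrow> (nat \<Rightarrow> int) \<Rightarrow> nat \<Rightarrow> bool"
  where "starvable n c r f g k \<longleftrightarrow>
    (\<forall>t. \<exists>S \<subseteq> {..<n}. card S = n - k \<and> independent_at n c r f g t S)"

lemma independent_at_add_of_int: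
  "independent_at n c r f g (t + of_int m) S \<longleftrightarrow> independent_at n c r f g t S"
  by (simp add: independent_at_def active_add_of_int)

lemma starvable_if_starvation_run:
  assumes run: "partial_run n c r f g occ" and "leaves n occ k" and "starvation n c r f g occ"
  shows "starvable n c r f g k"
  unfolding starvable_def
proof
  fix t0
  obtain T1 T2 where T: "T1 \<ge> 0" "T2 \<ge> 0" "\<forall>t\<ge>T1. card (occ t) = n - k"
    "\<forall>t\<ge>T2. \<forall>S. left_value occ t S \<longrightarrow> \<not> (\<exists>i j. active n c r f g t i j \<and> i \<in> S \<and> j \<in> S)"
    using assms(2,3) unfolding leaves_def starvation_def by blast
  define t where "t = t0 + of_int (\<lceil>T1 + T2 - t0\<rceil> + 1)"
  have "T1 + T2 - t0 \<le> of_int \<lceil>T1 + T2 - t0\<rceil>"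
    by (rule le_of_int_ceiling)
  then have t: "T1 < t" "T2 < t"
    using T(1,2) unfolding t_def of_int_add of_int_1 by linarith+
  then have "t > 0"
    using T(1) by linarith
  then obtain S where S: "left_value occ t S"
    using run unfolding partial_run_def by blast
  then obtain e where e: "e > 0" "\<forall>s. t - e < s \<and> s < t \<longrightarrow> occ s = S"
    unfolding left_value_def by blast
  define s where "s = max (t - e / 2) T1"
  have "t - e < s" "s < t" "T1 \<le> s"
    using e(1) t by (auto simp: s_def)
  then have occ_s: "occ s = S"
    using e(2) by blast
  with \<open>T1 \<le> s\<close> T(3) have "card S = n - k"
    by auto
  moreover have "S \<subseteq> {..<n}"
    using run \<open>T1 \<le> s\<close> T(1) unfolding partial_run_def occ_s[symmetric] by simp
  moreover have "independent_at n c r f g t S"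
    using T(4)[rule_format, OF less_imp_le[OF t(2)] S] unfolding independent_at_def by blast
  then have "independent_at n c r f g t0 S"
    unfolding t_def by (simp only: independent_at_add_of_int)
  ultimately show "\<exists>S \<subseteq> {..<n}. card S = n - k \<and> independent_at n c r f g t0 S"
    by blast
qed

text \<open>
  The robots occupy the independent set chosen for the next link event. At the event itself
  they do not meet, and the switching rule keeps at least \<open>n - k\<close> of them.
\<close>
lemma starvation_run_if_starvable:
  assumes vs: "valid_system n c r" and sy: "sync_schedule n c r f g"
    and st: "starvable n c r f g k"
  shows "\<exists>occ. partial_run n c r f g occ \<and> leaves n occ k \<and> starvation n c r f g occ"
proof -
  let ?A = "link_times n c r f g"
  obtain B where B: "\<And>t. B t \<subseteq> {..<n} \<and> card (B t) = n - k \<and> independent_at n c r f g t (B t)"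
    using st unfolding starvable_def by metis
  have "\<exists>Y. Y \<subseteq> switch n c r f g t (B t) \<and> card Y = n - k" for t
    using card_le_card_switch[OF vs sy, of "B t" t] B[of t] obtain_subset_with_card_n by metis
  then obtain X where X: "\<And>t. X t \<subseteq> switch n c r f g t (B t) \<and> card (X t) = n - k"
    by metis
  define occ where "occ t = (if next_event ?A t = t then X t else B (next_event ?A t))" for t
  have left: "left_value occ t (B (next_event ?A t))" for t
    unfolding occ_def by (rule left_value_next_event[OF finite_link_times link_times_nonempty])
  have step: "occ t \<subseteq> switch n c r f g t (B (next_event ?A t))" for t
  proof (cases "next_event ?A t = t")
    case True
    then show ?thesis
      using X[of t] by (simp add: occ_def)
  next
    case False
    then have "switch n c r f g t (B (next_event ?A t)) = B (next_event ?A t)"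
      using next_event_link_times[OF sy] by (intro switch_no_active) blast
    with False show ?thesis
      by (simp add: occ_def)
  qed
  have "partial_run n c r f g occ"
    unfolding partial_run_def
  proof (intro conjI allI impI)
    show "occ t \<subseteq> {..<n}" for t
      using step[of t] switch_subset_lessThan B by blast
    then show "occ 0 \<subseteq> switch n c r f g 0 {..<n}"
      by (simp only: switch_lessThan)
    show "\<exists>S. left_value occ t S \<and> occ t \<subseteq> switch n c r f g t S" for t
      using left step by blast
  qed
  moreover have "leaves n occ k"
    unfolding leaves_def occ_def using B X by auto
  moreover have "starvation n c r f g occ"
    unfolding starvation_def
  proof (intro exI[of _ 0] conjI allI impI)
    fix t S assume "left_value occ t S"
    then have "S = B (next_event ?A t)"
      using left_value_unique left by blast
    then show "\<not> (\<exists>i j. active n c r f g t i j \<and> i \<in> S \<and> j \<in> S)"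
      using B[of t] next_event_link_times[OF sy] unfolding independent_at_def by metis
  qed simp
  ultimately show ?thesis
    by blast
qed

lemma resilient_iff_not_starvable:
  assumes "valid_system n c r" "sync_schedule n c r f g"
  shows "resilient n c r f g k \<longleftrightarrow> k \<le> n \<and> \<not> starvable n c r f g k"
  using starvable_if_starvation_run starvation_run_if_starvable[OF assms]
  unfolding resilient_def by blast

lemma sync_schedule_link_sum:
  assumes sy: "sync_schedule n c r f g" and ij: "adj n c r i j"
  shows "\<exists>m::int. f i + f j = link_pos c i j + link_pos c j i + 2 * pi * of_int m"
proof -
  have "i < n"
    using ij by (simp add: adj_def)
  then have gi: "real_of_int (g i) * real_of_int (g i) = 1"
    using sync_schedule_direction[OF sy \<open>i < n\<close>] by auto
  define t where "t = link_time f g c i j"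
  have "pos f g i t = f i + real_of_int (g i) * real_of_int (g i) * (link_pos c i j - f i)"
    by (simp add: t_def link_time_def pos_def)
  then have pos_i: "pos f g i t = link_pos c i j"
    using gi by simp
  then have "on_angle (pos f g i t) (link_pos c i j)"
    unfolding on_angle_def by (intro exI[of _ 0]) simp
  then have "on_angle (pos f g j t) (link_pos c j i)"
    using sy ij unfolding sync_schedule_def by blast
  then obtain m :: int where "pos f g j t = link_pos c j i + 2 * pi * of_int m"
    unfolding on_angle_def by blast
  moreover have "pos f g j t = f j - (pos f g i t - f i)"
    using sync_schedule_adj_direction[OF sy ij] by (simp add: pos_def)
  ultimately show ?thesis
    using pos_i by (intro exI[of _ m]) (simp add: algebra_simps)
qed

lemma valid_system_induct [consumes 2, case_names zero adj]:
  assumes "valid_system n c r" "i < n"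
    and "P 0" and "\<And>a b. adj n c r a b \<Longrightarrow> P a \<Longrightarrow> P b"
  shows "P i"
proof -
  have "(0, i) \<in> {(a, b). adj n c r a b}\<^sup>*"
    using assms(1,2) unfolding valid_system_def by simp
  then show ?thesis
    by (induction rule: rtrancl_induct) (use assms(3,4) in auto)
qed

lemma sync_schedules_directions:
  assumes vs: "valid_system n c r"
    and s1: "sync_schedule n c r f1 g1" and s2: "sync_schedule n c r f2 g2"
  obtains \<sigma> :: int where "\<sigma> = 1 \<or> \<sigma> = -1" "\<And>i. i < n \<Longrightarrow> g2 i = \<sigma> * g1 i"
proof
  have "0 < n"
    using vs by (simp add: valid_system_def)
  then show "g2 0 * g1 0 = 1 \<or> g2 0 * g1 0 = -1"
    using sync_schedule_direction[OF s1 \<open>0 < n\<close>] sync_schedule_direction[OF s2 \<open>0 < n\<close>] by auto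
  fix i assume i: "i < n"
  from vs i have "g2 i * g1 i = g2 0 * g1 0"
  proof (induction rule: valid_system_induct)
    case (adj a b)
    then show ?case
      using sync_schedule_adj_direction[OF s1 adj.hyps] sync_schedule_adj_direction[OF s2 adj.hyps]
      by simp
  qed simp
  moreover have "g1 i * g1 i = 1"
    using sync_schedule_direction[OF s1 i] by auto
  ultimately show "g2 i = g2 0 * g1 0 * g1 i"
    by (metis mult.assoc mult.right_neutral)
qed

text \<open>
  Along an edge \<open>(a, b)\<close>, \<open>f a + f b\<close> is fixed modulo \<open>2\<pi>\<close> by the link positions, while
  \<open>g b = - g a\<close>; so \<open>g\<^sub>1 i (f\<^sub>2 i - f\<^sub>1 i)\<close> agrees modulo \<open>2\<pi>\<close> at both ends.
\<close>
lemma sync_schedules_phases: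
  assumes vs: "valid_system n c r"
    and s1: "sync_schedule n c r f1 g1" and s2: "sync_schedule n c r f2 g2" and i: "i < n"
  shows "\<exists>m::int. g1 i * (f2 i - f1 i) = g1 0 * (f2 0 - f1 0) + 2 * pi * of_int m"
  using vs i
proof (induction rule: valid_system_induct)
  case zero
  show ?case
    by (intro exI[of _ 0]) simp
next
  case (adj a b)
  then obtain m :: int where m: "g1 a * (f2 a - f1 a) = g1 0 * (f2 0 - f1 0) + 2 * pi * of_int m"
    by blast
  obtain m1 m2 :: int where
    "f1 a + f1 b = link_pos c a b + link_pos c b a + 2 * pi * of_int m1"
    "f2 a + f2 b = link_pos c a b + link_pos c b a + 2 * pi * of_int m2"
    using sync_schedule_link_sum[OF s1 adj.hyps(1)] sync_schedule_link_sum[OF s2 adj.hyps(1)]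
    by blast
  then have diff: "f2 b - f1 b = 2 * pi * of_int (m2 - m1) - (f2 a - f1 a)"
    by (simp add: algebra_simps)
  have "g1 b = - g1 a"
    by (rule sync_schedule_adj_direction[OF s1 adj.hyps(1)])
  then have "g1 b * (f2 b - f1 b) = g1 a * (f2 a - f1 a) - 2 * pi * of_int (g1 a * (m2 - m1))"
    unfolding diff by (simp add: algebra_simps)
  also have "\<dots> = g1 0 * (f2 0 - f1 0) + 2 * pi * of_int (m - g1 a * (m2 - m1))"
    unfolding m by (simp add: algebra_simps)
  finally show ?case
    by blast
qed

lemma sync_schedules_time_change:
  assumes vs: "valid_system n c r"
    and s1: "sync_schedule n c r f1 g1" and s2: "sync_schedule n c r f2 g2"
  obtains \<tau> \<sigma> :: real where "\<sigma> = 1 \<or> \<sigma> = -1"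
    "\<And>t i j. active n c r f2 g2 t i j \<longleftrightarrow> active n c r f1 g1 (\<tau> + \<sigma> * t) i j"
proof -
  obtain \<sigma> :: int where \<sigma>: "\<sigma> = 1 \<or> \<sigma> = -1" "\<And>i. i < n \<Longrightarrow> g2 i = \<sigma> * g1 i"
    using sync_schedules_directions[OF assms] by blast
  define \<tau> where "\<tau> = g1 0 * (f2 0 - f1 0) / (2 * pi)"
  have "real_of_int \<sigma> = 1 \<or> real_of_int \<sigma> = -1"
    using \<sigma>(1) by auto
  moreover have "active n c r f2 g2 t i j \<longleftrightarrow> active n c r f1 g1 (\<tau> + of_int \<sigma> * t) i j"
    for t :: real and i j
  proof (cases "adj n c r i j")
    case True
    then have i: "i < n"
      by (simp add: adj_def)
    obtain m :: int where m: "g1 i * (f2 i - f1 i) = g1 0 * (f2 0 - f1 0) + 2 * pi * of_int m"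
      using sync_schedules_phases[OF assms i] by blast
    have "real_of_int (g1 i) * real_of_int (g1 i) = 1"
      using sync_schedule_direction[OF s1 i] by auto
    then have "f2 i - f1 i = g1 i * (g1 i * (f2 i - f1 i))"
      by (simp add: mult.assoc[symmetric])
    then have f2: "f2 i = f1 i + g1 i * (g1 0 * (f2 0 - f1 0) + 2 * pi * of_int m)"
      using m by simp
    have "pos f2 g2 i t = pos f1 g1 i (\<tau> + \<sigma> * t) + 2 * pi * of_int (g1 i * m)"
      unfolding pos_def f2 \<sigma>(2)[OF i] \<tau>_def by (simp add: field_simps)
    then show ?thesis
      by (simp only: active_def on_angle_add_2pi_multiple)
  qed (simp add: active_def)
  ultimately show ?thesis
    by (rule that)
qed

lemma starvable_time_change:
  assumes \<sigma>: "\<sigma> = 1 \<or> \<sigma> = -1"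
    and act: "\<And>t i j. active n c r f2 g2 t i j \<longleftrightarrow> active n c r f1 g1 (\<tau> + \<sigma> * t) i j"
  shows "starvable n c r f2 g2 k \<longleftrightarrow> starvable n c r f1 g1 k"
proof -
  let ?P = "\<lambda>t. \<exists>S \<subseteq> {..<n}. card S = n - k \<and> independent_at n c r f1 g1 t S"
  have "starvable n c r f2 g2 k \<longleftrightarrow> (\<forall>t. ?P (\<tau> + \<sigma> * t))"
    by (simp add: starvable_def independent_at_def act)
  also have "\<dots> \<longleftrightarrow> (\<forall>t. ?P t)"
  proof
    assume "\<forall>t. ?P (\<tau> + \<sigma> * t)"
    then have "?P (\<tau> + \<sigma> * (\<sigma> * (t - \<tau>)))" for t
      by blast
    moreover have "\<tau> + \<sigma> * (\<sigma> * (t - \<tau>)) = t" for t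
      using \<sigma> by auto
    ultimately show "\<forall>t. ?P t"
      by simp
  qed simp
  finally show ?thesis
    by (simp add: starvable_def)
qed

theorem corollary5:
  fixes n :: nat and c :: "nat \<Rightarrow> complex" and r :: real
    and f1 f2 :: "nat \<Rightarrow> real" and g1 g2 :: "nat \<Rightarrow> int"
  assumes "valid_system n c r"
    and "sync_schedule n c r f1 g1"
    and "sync_schedule n c r f2 g2"
  shows "isolation_resilience n c r f1 g1 = isolation_resilience n c r f2 g2"
proof -
  obtain \<tau> \<sigma> :: real where time_change: "\<sigma> = 1 \<or> \<sigma> = -1"
    "\<And>t i j. active n c r f2 g2 t i j \<longleftrightarrow> active n c r f1 g1 (\<tau> + \<sigma> * t) i j"
    using sync_schedules_time_change[OF assms] by metis
  have "resilient n c r f1 g1 = resilient n c r f2 g2"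
  proof
    fix k
    have "starvable n c r f2 g2 k \<longleftrightarrow> starvable n c r f1 g1 k"
      using time_change by (rule starvable_time_change)
    then show "resilient n c r f1 g1 k \<longleftrightarrow> resilient n c r f2 g2 k"
      unfolding resilient_iff_not_starvable[OF assms(1,2)] resilient_iff_not_starvable[OF assms(1,3)]
      by simp
  qed
  then show ?thesis
    unfolding isolation_resilience_def by simp
qed

end
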